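(* Let $d \ge 1$, $\alpha>0$, $p_0\in[1/2,1]$, and let $\mathcal{D}$ be the distribution on $\mathbb{R}^{d+1}\times\{-1,+1\}$ defined in the context, with $\eta=\alpha/\sqrt d$. Let $S_\infty$ be the $\ell_\infty$-perturbation set of radius $\epsilon=2\eta$ and $S_1$ the $\ell_1$-perturbation set of radius $\epsilon=2$. Then for every classifier $f:\mathbb{R}^{d+1}\to\{-1,+1\}$, $$\mathcal{R}^{\mathrm{avg}}_{\mathrm{adv}}(f;S_\infty,S_1)\;\ge\;\tfrac12 .$$
   Context: The distribution $\mathcal{D}$ over pairs $(\mathbf{x},y)$, $\mathbf{x}=(x_0,x_1,\dots,x_d)\in\mathbb{R}^{d+1}$, $y\in\{-1,+1\}$: $y$ is uniform on $\{-1,+1\}$; given $y$, $x_0=+y$ with probability $p_0$ and $x_0=-y$ with probability $1-p_0$; and $x_1,\dots,x_d$ are i.i.d. $\mathcal{N}(y\eta,1)$, independent of $x_0$, where $\eta=\alpha/\sqrt d$. For a set-valued perturbation model assigning to each input $\mathbf{x}$ a set $S(\mathbf{x})$ of allowed perturbed inputs, the adversarial risk of a classifier $f$ is $\mathcal{R}_{\mathrm{adv}}(f;S)=\Pr_{(\mathbf{x},y)\sim\mathcal{D}}[\exists\,\mathbf{x}'\in S(\mathbf{x}): f(\mathbf{x}')\neq y]$. The $\ell_p$-perturbation set of radius $\epsilon$ is $S(\mathbf{x})=\{\mathbf{x}+\mathbf{r}:\|\mathbf{r}\|_p\le\epsilon\}$. For perturbation sets $S_1,\dots,S_n$: $\mathcal{R}^{\mathrm{avg}}_{\mathrm{adv}}(f;S_1,\dots,S_n)=\frac1n\sum_i\mathcal{R}_{\mathrm{adv}}(f;S_i)$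 and $\mathcal{R}^{\mathrm{max}}_{\mathrm{adv}}(f;S_1,\dots,S_n)=\mathcal{R}_{\mathrm{adv}}(f;\cup_i S_i)$, where $(\cup_iS_i)(\mathbf{x})=\cup_iS_i(\mathbf{x})$. Classifiers are arbitrary measurable maps. *)

theory Defs
  imports "HOL-Probability.Probability"
begin

text \<open>Inputs x = (x_0,...,x_d) in R^(d+1) are represented as extensional functions
  nat => real on the index set {..d}, i.e. elements of space (input_space d).
  Labels y are reals taking values -1 or +1.\<close>

definition input_space :: "nat \<Rightarrow> (nat \<Rightarrow> real) measure" where
  "input_space d = PiM {..d} (\<lambda>_. borel)"

definition eta :: "nat \<Rightarrow> real \<Rightarrow> real" where
  "eta d \<alpha> = \<alpha> / sqrt (real d)"

definition x0_law :: "real \<Rightarrow> real \<Rightarrow> real measure" where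
  "x0_law p0 y = distr (measure_pmf (map_pmf (\<lambda>b. if b then y else - y) (bernoulli_pmf p0))) borel id"

definition xi_law :: "nat \<Rightarrow> real \<Rightarrow> real \<Rightarrow> real measure" where
  "xi_law d \<alpha> y = density lborel (normal_density (y * eta d \<alpha>) 1)"

definition cond_law :: "nat \<Rightarrow> real \<Rightarrow> real \<Rightarrow> real \<Rightarrow> (nat \<Rightarrow> real) measure" where
  "cond_law d \<alpha> p0 y = PiM {..d} (\<lambda>i. if i = 0 then x0_law p0 y else xi_law d \<alpha> y)"

definition data_dist :: "nat \<Rightarrow> real \<Rightarrow> real \<Rightarrow> ((nat \<Rightarrow> real) \<times> real) measure" where
  "data_dist d \<alpha> p0 =
     measure_pmf (pmf_of_set {-1, 1}) \<bind>
       (\<lambda>y. distr (cond_law d \<alpha> p0 y) (input_space d \<Otimes>\<^sub>M count_space UNIV) (\<lambda>x. (x, y)))"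

definition outer_prob :: "'a measure \<Rightarrow> 'a set \<Rightarrow> real" where
  "outer_prob M E = Inf {measure M A | A. A \<in> sets M \<and> E \<subseteq> A}"

definition linf_norm :: "nat \<Rightarrow> (nat \<Rightarrow> real) \<Rightarrow> real" where
  "linf_norm d r = Max ((\<lambda>i. \<bar>r i\<bar>) ` {..d})"

definition l1_norm :: "nat \<Rightarrow> (nat \<Rightarrow> real) \<Rightarrow> real" where
  "l1_norm d r = (\<Sum>i\<le>d. \<bar>r i\<bar>)"

definition linf_pert :: "nat \<Rightarrow> real \<Rightarrow> (nat \<Rightarrow> real) \<Rightarrow> (nat \<Rightarrow> real) set" where
  "linf_pert d \<epsilon> x = {(\<lambda>i. x i + r i) | r. r \<in> space (input_space d) \<and> linf_norm d r \<le> \<epsilon>}"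

definition l1_pert :: "nat \<Rightarrow> real \<Rightarrow> (nat \<Rightarrow> real) \<Rightarrow> (nat \<Rightarrow> real) set" where
  "l1_pert d \<epsilon> x = {(\<lambda>i. x i + r i) | r. r \<in> space (input_space d) \<and> l1_norm d r \<le> \<epsilon>}"

definition adv_risk ::
  "((nat \<Rightarrow> real) \<times> real) measure \<Rightarrow> ((nat \<Rightarrow> real) \<Rightarrow> real)
     \<Rightarrow> ((nat \<Rightarrow> real) \<Rightarrow> (nat \<Rightarrow> real) set) \<Rightarrow> real" where
  "adv_risk D f S = outer_prob D {(x, y) \<in> space D. \<exists>x'\<in>S x. f x' \<noteq> y}"

definition adv_risk_avg ::
  "((nat \<Rightarrow> real) \<times> real) measure \<Rightarrow> ((nat \<Rightarrow> real) \<Rightarrow> real)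
     \<Rightarrow> ((nat \<Rightarrow> real) \<Rightarrow> (nat \<Rightarrow> real) set) list \<Rightarrow> real" where
  "adv_risk_avg D f Ss = (\<Sum>S\<leftarrow>Ss. adv_risk D f S) / real (length Ss)"

end

theory Submission
  imports Defs
begin

text \<open>
  The map class_swap, x \<mapsto> (-x0, x1 - 2\<eta>, ..., xd - 2\<eta>), transports the law of x given y = 1
  onto the law of x given y = -1. For x0 = \<plusminus>1 the point (x0, x1 - 2\<eta>, ..., xd - 2\<eta>) lies in the
  l-infinity ball of radius 2\<eta> around x and in the l1 ball of radius 2 around class_swap x, so
  whatever f says there, it is wrong either for (x, 1) or for (class_swap x, -1). The point
  (-x0, x1, ..., xd) does the same with the two balls exchanged. Integrating both alternatives
  over x given y = 1 and transporting the second events to y = -1 yields R_inf + R_1 \<ge> 1.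
\<close>

lemma distr_PiM_componentwise:
  assumes fin: "finite I"
    and prob: "\<And>i. prob_space (M i)"
    and [measurable]: "\<And>i. f i \<in> M i \<rightarrow>\<^sub>M M' i"
  shows "distr (PiM I M) (PiM I M') (\<lambda>x. \<lambda>i\<in>I. f i (x i)) = PiM I (\<lambda>i. distr (M i) (M' i) (f i))"
proof (rule product_sigma_finite.PiM_eqI)
  interpret M: product_prob_space M
    using prob by (rule product_prob_spaceI)
  show "product_sigma_finite (\<lambda>i. distr (M i) (M' i) (f i))"
    unfolding product_sigma_finite_def
    by (auto intro!: prob_space_imp_sigma_finite prob_space.prob_space_distr prob)
  show "sets (distr (PiM I M) (PiM I M') (\<lambda>x. \<lambda>i\<in>I. f i (x i)))
      = sets (PiM I (\<lambda>i. distr (M i) (M' i) (f i)))"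
    by (auto intro!: sets_PiM_cong)
  fix A assume A: "\<And>i. i \<in> I \<Longrightarrow> A i \<in> sets (distr (M i) (M' i) (f i))"
  have "(\<lambda>x. \<lambda>i\<in>I. f i (x i)) -` Pi\<^sub>E I A \<inter> space (PiM I M) = Pi\<^sub>E I (\<lambda>i. f i -` A i \<inter> space (M i))"
    by (auto simp: space_PiM PiE_def Pi_def extensional_def)
  moreover have "Pi\<^sub>E I A \<in> sets (PiM I M')"
    using A by (intro sets_PiM_I_finite fin) auto
  ultimately show "emeasure (distr (PiM I M) (PiM I M') (\<lambda>x. \<lambda>i\<in>I. f i (x i))) (Pi\<^sub>E I A)
      = (\<Prod>i\<in>I. emeasure (distr (M i) (M' i) (f i)) (A i))"
    using A by (simp add: emeasure_distr M.emeasure_PiM fin)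
qed (fact fin)

lemma outer_prob_add_ge:
  assumes "E \<subseteq> space M" "F \<subseteq> space M"
    and "\<And>A B. A \<in> sets M \<Longrightarrow> E \<subseteq> A \<Longrightarrow> B \<in> sets M \<Longrightarrow> F \<subseteq> B \<Longrightarrow> c \<le> measure M A + measure M B"
  shows "c \<le> outer_prob M E + outer_prob M F"
proof -
  have nonempty: "{measure M A | A. A \<in> sets M \<and> G \<subseteq> A} \<noteq> {}" if "G \<subseteq> space M" for G
    using that by blast
  have "c - outer_prob M F \<le> outer_prob M E"
    unfolding outer_prob_def
  proof (intro cInf_greatest nonempty assms(1), clarify)
    fix A assume A: "A \<in> sets M" "E \<subseteq> A"
    have "c - measure M A \<le> outer_prob M F"
      unfolding outer_prob_def
      by (intro cInf_greatest nonempty assms(2)) (use A assms(3) in fastforce)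
    then show "c - Inf {measure M B | B. B \<in> sets M \<and> F \<subseteq> B} \<le> measure M A"
      by (simp add: outer_prob_def)
  qed
  then show ?thesis
    by simp
qed

lemma sets_x0_law [simp]: "sets (x0_law p0 y) = sets borel"
  by (simp add: x0_law_def)

lemma sets_xi_law [simp]: "sets (xi_law d \<alpha> y) = sets borel"
  by (simp add: xi_law_def)

lemma prob_space_x0_law: "prob_space (x0_law p0 y)"
  unfolding x0_law_def by (auto intro!: prob_space.prob_space_distr prob_space_measure_pmf)

lemma prob_space_xi_law: "prob_space (xi_law d \<alpha> y)"
  unfolding xi_law_def by (rule prob_space_normal_density) simp

lemma distr_x0_law_uminus: "distr (x0_law p0 y) borel uminus = x0_law p0 (- y)"
  unfolding x0_law_def map_pmf_rep_eq
  by (simp add: distr_distr comp_def if_distrib id_def)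

lemma distr_xi_law_shift:
  "distr (xi_law d \<alpha> y) borel (\<lambda>t. t - 2 * y * eta d \<alpha>) = xi_law d \<alpha> (- y)"
proof -
  have "normal_density (- y * eta d \<alpha>) 1 (t - 2 * y * eta d \<alpha>) = normal_density (y * eta d \<alpha>) 1 t" for t
    by (simp add: normal_density_def power2_eq_square algebra_simps)
  then have "distr (xi_law d \<alpha> y) borel ((+) (- 2 * y * eta d \<alpha>))
      = density (distr lborel borel ((+) (- 2 * y * eta d \<alpha>))) (normal_density (- y * eta d \<alpha>) 1)"
    unfolding xi_law_def by (subst density_distr) auto
  moreover have "(\<lambda>t. t - 2 * y * eta d \<alpha>) = (+) (- 2 * y * eta d \<alpha>)"
    by auto
  ultimately show ?thesis
    unfolding xi_law_def lborel_distr_plus by simp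
qed

lemma prob_space_cond_law: "prob_space (cond_law d \<alpha> p0 y)"
  unfolding cond_law_def
  by (intro prob_space_PiM) (auto simp: prob_space_x0_law prob_space_xi_law)

lemma sets_cond_law [simp]: "sets (cond_law d \<alpha> p0 y) = sets (input_space d)"
  unfolding cond_law_def input_space_def by (intro sets_PiM_cong) auto

lemma space_cond_law [simp]: "space (cond_law d \<alpha> p0 y) = space (input_space d)"
  by (rule sets_eq_imp_space_eq) simp

lemma AE_cond_law_coordinate0: "AE x in cond_law d \<alpha> p0 y. x 0 \<in> {-y, y}"
proof -
  have "AE t in x0_law p0 y. t \<in> {-y, y}"
    unfolding x0_law_def by (subst AE_distr_iff) (auto simp: AE_measure_pmf_iff)
  then show ?thesis
    unfolding cond_law_def
    by (intro AE_PiM_component) (auto simp: prob_space_x0_law prob_space_xi_law)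
qed

definition class_swap :: "nat \<Rightarrow> real \<Rightarrow> (nat \<Rightarrow> real) \<Rightarrow> nat \<Rightarrow> real" where
  "class_swap d \<alpha> x = (\<lambda>i\<in>{..d}. if i = 0 then - x i else x i - 2 * eta d \<alpha>)"

lemma class_swap_in_space: "class_swap d \<alpha> x \<in> space (input_space d)"
  by (simp add: class_swap_def input_space_def space_PiM)

lemma measurable_class_swap [measurable]: "class_swap d \<alpha> \<in> input_space d \<rightarrow>\<^sub>M input_space d"
  unfolding class_swap_def input_space_def by measurable

lemma distr_cond_law_class_swap:
  "distr (cond_law d \<alpha> p0 1) (input_space d) (class_swap d \<alpha>) = cond_law d \<alpha> p0 (- 1)"
proof -
  define M where "M i = (if i = 0 then x0_law p0 1 else xi_law d \<alpha> 1)" for i :: nat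
  define g where "g i = (if i = 0 then uminus else (\<lambda>t. t - 2 * eta d \<alpha>))" for i :: nat
  have "cond_law d \<alpha> p0 1 = PiM {..d} M"
    unfolding cond_law_def M_def by (rule refl)
  moreover have "class_swap d \<alpha> = (\<lambda>x. \<lambda>i\<in>{..d}. g i (x i))"
    by (auto simp: class_swap_def g_def fun_eq_iff)
  moreover have "distr (PiM {..d} M) (input_space d) (\<lambda>x. \<lambda>i\<in>{..d}. g i (x i))
      = PiM {..d} (\<lambda>i. distr (M i) borel (g i))"
    unfolding input_space_def
    by (rule distr_PiM_componentwise)
       (auto simp: M_def g_def prob_space_x0_law prob_space_xi_law cong: measurable_cong_sets)
  moreover have "distr (M i) borel (g i) = (if i = 0 then x0_law p0 (- 1) else xi_law d \<alpha> (- 1))" for i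
    using distr_xi_law_shift[where y = 1] by (simp add: M_def g_def distr_x0_law_uminus)
  ultimately show ?thesis
    by (simp add: cond_law_def)
qed

lemma sets_data_dist: "sets (data_dist d \<alpha> p0) = sets (input_space d \<Otimes>\<^sub>M count_space UNIV)"
  unfolding data_dist_def by (subst sets_bind) auto

lemma space_data_dist: "space (data_dist d \<alpha> p0) = space (input_space d) \<times> UNIV"
  using sets_data_dist[THEN sets_eq_imp_space_eq] by (simp add: space_pair_measure)

lemma measure_data_dist:
  assumes A: "A \<in> sets (data_dist d \<alpha> p0)"
  shows "measure (data_dist d \<alpha> p0) A =
    (measure (cond_law d \<alpha> p0 1) ((\<lambda>x. (x, 1)) -` A \<inter> space (input_space d))
      + measure (cond_law d \<alpha> p0 (- 1)) ((\<lambda>x. (x, - 1)) -` A \<inter> space (input_space d))) / 2"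
proof -
  let ?R = "input_space d \<Otimes>\<^sub>M count_space (UNIV :: real set)"
  let ?N = "\<lambda>y. distr (cond_law d \<alpha> p0 y) ?R (\<lambda>x. (x, y))"
  have pair_measurable: "(\<lambda>x. (x, y)) \<in> cond_law d \<alpha> p0 y \<rightarrow>\<^sub>M ?R" for y
    by (simp cong: measurable_cong_sets)
  have AR: "A \<in> sets ?R"
    using A by (simp add: sets_data_dist)
  have "?N \<in> measure_pmf (pmf_of_set {-1, 1}) \<rightarrow>\<^sub>M subprob_algebra ?R"
    by (auto simp: space_subprob_algebra intro!: prob_space_imp_subprob_space
        prob_space.prob_space_distr prob_space_cond_law pair_measurable)
  then have "measure (data_dist d \<alpha> p0) A = (\<integral>y. measure (?N y) A \<partial>measure_pmf (pmf_of_set {-1, 1}))"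
    unfolding data_dist_def using AR by (rule measure_pmf.measure_bind)
  also have "\<dots> = (measure (?N 1) A + measure (?N (- 1)) A) / 2"
    by (subst integral_pmf_of_set) auto
  finally show ?thesis
    using pair_measurable AR by (simp add: measure_distr)
qed

lemma cond_law_class_swap_cover:
  assumes A: "A \<in> sets (input_space d)" and B: "B \<in> sets (input_space d)"
    and cover: "\<And>x. x \<in> space (input_space d) \<Longrightarrow> x 0 \<in> {-1, 1} \<Longrightarrow> x \<in> A \<or> class_swap d \<alpha> x \<in> B"
  shows "1 \<le> measure (cond_law d \<alpha> p0 1) A + measure (cond_law d \<alpha> p0 (- 1)) B"
proof -
  interpret P: prob_space "cond_law d \<alpha> p0 1"
    by (rule prob_space_cond_law)
  define C where "C = class_swap d \<alpha> -` B \<inter> space (input_space d)"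
  have C: "C \<in> P.events"
    unfolding C_def using B by simp
  have "measure (cond_law d \<alpha> p0 (- 1)) B = P.prob C"
    unfolding C_def distr_cond_law_class_swap[symmetric]
    using B by (subst measure_distr) (auto cong: measurable_cong_sets)
  moreover have "AE x in cond_law d \<alpha> p0 1. x \<in> A \<union> C"
    using AE_cond_law_coordinate0[where y = 1] AE_space
    by eventually_elim (use cover in \<open>auto simp: C_def\<close>)
  then have "P.prob (A \<union> C) = 1"
    using A C by (subst P.prob_eq_1) auto
  moreover have "P.prob (A \<union> C) \<le> P.prob A + P.prob C"
    using A C by (intro measure_Un_le) auto
  ultimately show ?thesis
    by simp
qed

lemma attack_supersets_measure_add_ge_one:
  fixes d :: nat and \<alpha> p0 :: real and f :: "(nat \<Rightarrow> real) \<Rightarrow> real"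
    and S T :: "(nat \<Rightarrow> real) \<Rightarrow> (nat \<Rightarrow> real) set"
  defines "attack U \<equiv> {(x, y) \<in> space (data_dist d \<alpha> p0). \<exists>x'\<in>U x. f x' \<noteq> y}"
  assumes A: "A \<in> sets (data_dist d \<alpha> p0)" "attack S \<subseteq> A"
    and B: "B \<in> sets (data_dist d \<alpha> p0)" "attack T \<subseteq> B"
    and ST: "\<And>x. x \<in> space (input_space d) \<Longrightarrow> x 0 \<in> {-1, 1} \<Longrightarrow> S x \<inter> T (class_swap d \<alpha> x) \<noteq> {}"
    and TS: "\<And>x. x \<in> space (input_space d) \<Longrightarrow> x 0 \<in> {-1, 1} \<Longrightarrow> T x \<inter> S (class_swap d \<alpha> x) \<noteq> {}"
  shows "1 \<le> measure (data_dist d \<alpha> p0) A + measure (data_dist d \<alpha> p0) B"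
proof -
  let ?I = "input_space d"
  define slice where "slice E y = (\<lambda>x. (x, y)) -` E \<inter> space ?I" for E and y :: real
  have slice_sets: "slice E y \<in> sets ?I" if "E \<in> sets (data_dist d \<alpha> p0)" for E y
    unfolding slice_def using that by (simp add: sets_data_dist)
  \<comment> \<open>A point w in both U x and V (class_swap x) attacks (x, 1) if f w \<noteq> 1 and (class_swap x, -1) otherwise.\<close>
  have swap_cover: "x \<in> slice E 1 \<or> class_swap d \<alpha> x \<in> slice F (- 1)"
    if EF: "attack U \<subseteq> E" "attack V \<subseteq> F" and UV: "U x \<inter> V (class_swap d \<alpha> x) \<noteq> {}"
      and x: "x \<in> space ?I"
    for E F U V x
  proof -
    obtain w where w: "w \<in> U x" "w \<in> V (class_swap d \<alpha> x)"
      using UV by blast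
    show ?thesis
    proof (cases "f w = 1")
      case True
      then have "(class_swap d \<alpha> x, - 1) \<in> attack V"
        using w class_swap_in_space by (force simp: attack_def space_data_dist)
      then show ?thesis
        using EF class_swap_in_space by (auto simp: slice_def)
    next
      case False
      then have "(x, 1) \<in> attack U"
        using w x by (force simp: attack_def space_data_dist)
      then show ?thesis
        using EF x by (auto simp: slice_def)
    qed
  qed
  have "1 \<le> measure (cond_law d \<alpha> p0 1) (slice A 1) + measure (cond_law d \<alpha> p0 (- 1)) (slice B (- 1))"
    using A B ST by (intro cond_law_class_swap_cover slice_sets swap_cover) auto
  moreover have "1 \<le> measure (cond_law d \<alpha> p0 1) (slice B 1) + measure (cond_law d \<alpha> p0 (- 1)) (slice A (- 1))"
    using A B TS by (intro cond_law_class_swap_cover slice_sets swap_cover) auto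
  ultimately show ?thesis
    unfolding measure_data_dist[OF A(1)] measure_data_dist[OF B(1)] slice_def by (simp add: field_simps)
qed

lemma adv_risk_data_dist_add_ge_one:
  fixes f :: "(nat \<Rightarrow> real) \<Rightarrow> real" and S T :: "(nat \<Rightarrow> real) \<Rightarrow> (nat \<Rightarrow> real) set"
  assumes "\<And>x. x \<in> space (input_space d) \<Longrightarrow> x 0 \<in> {-1, 1} \<Longrightarrow> S x \<inter> T (class_swap d \<alpha> x) \<noteq> {}"
    and "\<And>x. x \<in> space (input_space d) \<Longrightarrow> x 0 \<in> {-1, 1} \<Longrightarrow> T x \<inter> S (class_swap d \<alpha> x) \<noteq> {}"
  shows "1 \<le> adv_risk (data_dist d \<alpha> p0) f S + adv_risk (data_dist d \<alpha> p0) f T"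
  unfolding adv_risk_def
proof (rule outer_prob_add_ge)
  fix A B
  assume "A \<in> sets (data_dist d \<alpha> p0)" "{(x, y) \<in> space (data_dist d \<alpha> p0). \<exists>x'\<in>S x. f x' \<noteq> y} \<subseteq> A"
    and "B \<in> sets (data_dist d \<alpha> p0)" "{(x, y) \<in> space (data_dist d \<alpha> p0). \<exists>x'\<in>T x. f x' \<noteq> y} \<subseteq> B"
  then show "1 \<le> measure (data_dist d \<alpha> p0) A + measure (data_dist d \<alpha> p0) B"
    using assms by (rule attack_supersets_measure_add_ge_one)
qed auto

lemma space_input_space_iff: "x \<in> space (input_space d) \<longleftrightarrow> (\<forall>i>d. x i = undefined)"
  by (auto simp: input_space_def space_PiM PiE_iff extensional_def)

lemma linf_norm_le:
  assumes "\<And>i. i \<le> d \<Longrightarrow> \<bar>r i\<bar> \<le> c"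
  shows "linf_norm d r \<le> c"
  unfolding linf_norm_def using assms by (subst Max_le_iff) auto

lemma l1_norm_coordinate0: "l1_norm d (\<lambda>i\<in>{..d}. if i = 0 then c else 0) = \<bar>c\<bar>"
proof -
  have "l1_norm d (\<lambda>i\<in>{..d}. if i = 0 then c else 0) = (\<Sum>i\<le>d. if i = 0 then \<bar>c\<bar> else 0)"
    unfolding l1_norm_def by (intro sum.cong) auto
  then show ?thesis
    by simp
qed

lemma linf_pert_inter_l1_pert_class_swap:
  assumes x: "x \<in> space (input_space d)" "x 0 \<in> {-1, 1}" and eta: "0 \<le> eta d \<alpha>"
  shows "linf_pert d (2 * eta d \<alpha>) x \<inter> l1_pert d 2 (class_swap d \<alpha> x) \<noteq> {}"
proof -
  define r where "r = (\<lambda>i\<in>{..d}. if i = 0 then 0 else - 2 * eta d \<alpha>)"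
  define r' where "r' = (\<lambda>i\<in>{..d}. if i = 0 then 2 * x 0 else 0)"
  have "(\<lambda>i. x i + r i) \<in> linf_pert d (2 * eta d \<alpha>) x"
    unfolding linf_pert_def using eta
    by (auto simp: r_def space_input_space_iff intro!: exI[of _ r] linf_norm_le)
  moreover have "(\<lambda>i. x i + r i) = (\<lambda>i. class_swap d \<alpha> x i + r' i)"
    using x(1) by (auto simp: r_def r'_def class_swap_def space_input_space_iff)
  moreover have "(\<lambda>i. class_swap d \<alpha> x i + r' i) \<in> l1_pert d 2 (class_swap d \<alpha> x)"
    unfolding l1_pert_def using x(2)
    by (auto simp: r'_def space_input_space_iff l1_norm_coordinate0 intro!: exI[of _ r'])
  ultimately show ?thesis
    by auto
qed

lemma l1_pert_inter_linf_pert_class_swap: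
  assumes x: "x \<in> space (input_space d)" "x 0 \<in> {-1, 1}" and eta: "0 \<le> eta d \<alpha>"
  shows "l1_pert d 2 x \<inter> linf_pert d (2 * eta d \<alpha>) (class_swap d \<alpha> x) \<noteq> {}"
proof -
  define r where "r = (\<lambda>i\<in>{..d}. if i = 0 then - 2 * x 0 else 0)"
  define r' where "r' = (\<lambda>i\<in>{..d}. if i = 0 then 0 else 2 * eta d \<alpha>)"
  have "(\<lambda>i. x i + r i) \<in> l1_pert d 2 x"
    unfolding l1_pert_def using x(2)
    by (auto simp: r_def space_input_space_iff l1_norm_coordinate0 intro!: exI[of _ r])
  moreover have "(\<lambda>i. x i + r i) = (\<lambda>i. class_swap d \<alpha> x i + r' i)"
    using x(1) by (auto simp: r_def r'_def class_swap_def space_input_space_iff)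
  moreover have "(\<lambda>i. class_swap d \<alpha> x i + r' i) \<in> linf_pert d (2 * eta d \<alpha>) (class_swap d \<alpha> x)"
    unfolding linf_pert_def using eta
    by (auto simp: r'_def space_input_space_iff intro!: exI[of _ r'] linf_norm_le)
  ultimately show ?thesis
    by auto
qed

theorem theorem1:
  fixes d :: nat and \<alpha> p0 :: real and f :: "(nat \<Rightarrow> real) \<Rightarrow> real"
  assumes "d \<ge> 1" and "\<alpha> > 0" and "1/2 \<le> p0" and "p0 \<le> 1"
    and "f \<in> input_space d \<rightarrow>\<^sub>M count_space UNIV"
    and "\<forall>x\<in>space (input_space d). f x \<in> {-1, 1}"
  shows "adv_risk_avg (data_dist d \<alpha> p0) f
           [linf_pert d (2 * eta d \<alpha>), l1_pert d 2] \<ge> 1/2"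
proof -
  have eta: "0 \<le> eta d \<alpha>"
    using \<open>\<alpha> > 0\<close> by (simp add: eta_def)
  have "1 \<le> adv_risk (data_dist d \<alpha> p0) f (linf_pert d (2 * eta d \<alpha>))
      + adv_risk (data_dist d \<alpha> p0) f (l1_pert d 2)"
    using linf_pert_inter_l1_pert_class_swap l1_pert_inter_linf_pert_class_swap eta
    by (intro adv_risk_data_dist_add_ge_one) auto
  then show ?thesis
    by (simp add: adv_risk_avg_def)
qed

end
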